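(* Let $I\subseteq(0,1)$ be an interval forecast, and let $(D_i)_{i\in\mathbb N_0}$ be non-negative real supermartingale multipliers for $I$ such that $(D_i^{\circledcirc})_{i\in\mathbb N_0}$ is a recursive enumeration of lower semicomputable test supermartingales for $I$ (i.e. there is a recursive $q:\mathbb N_0\times\mathbb S\times\mathbb N_0\to\mathbb Q$ with $q(i,s,n+1)\ge q(i,s,n)$ and $\lim_nq(i,s,n)=D_i^{\circledcirc}(s)$ for all $i,s,n$). Then the process $T(s)=\sum_{i=0}^\infty2^{-i-1}D_i^{\circledcirc}(s)$, $s\in\mathbb S$, is a lower semicomputable test supermartingale for $I$.
   Context: $\mathcal X=\{0,1\}$, $\mathbb S=\bigcup_{n\ge0}\mathcal X^n$ (finite binary strings), $\square$ the empty string, $sx$ concatenation. Interval forecasts are nonempty closed intervals $I\subseteq[0,1]$; $\overline E_I(f)=\max_{p\in I}[pf(1)+(1-p)f(0)]$. A real multiplier process $D$ maps $\mathbb S$ to gambles $\mathcal X\to\mathbb R$; it is a supermartingale multiplier for $I$ if $\overline E_I(D(s))\le1$ for all $s$; it generates $D^{\circledcirc}(x_1,\dots,x_n)=\prod_{k=0}^{n-1}D(x_{1:k})(x_{k+1})$. A test supermartingale for $I$ is $T:\mathbb S\to\mathbb R_{\ge0}$ with $T(\square)=1$ and $\overline E_I(T(s\,\cdot)-T(s))\le0$ for all $s$; it is lower semicomputable if there is a recursive $r:\mathbb S\times\mathbb N_0\to\mathbb Q$ non-decreasing in $n$ with $T(s)=\lim_nr(s,n)$. *)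

theory Defs
  imports Complex_Main "HOL-Library.Nat_Bijection"
begin

text \<open>rec_fn n f: f, as a function on argument lists of length n, is total recursive.
 Only the values on lists of length n matter (closure rule ext).\<close>

inductive rec_fn :: "nat \<Rightarrow> (nat list \<Rightarrow> nat) \<Rightarrow> bool" where
  zero: "rec_fn n (\<lambda>_. 0)"
| succ: "rec_fn 1 (\<lambda>xs. Suc (hd xs))"
| proj: "i < n \<Longrightarrow> rec_fn n (\<lambda>xs. xs ! i)"
| comp: "rec_fn m f \<Longrightarrow> length gs = m \<Longrightarrow> (\<forall>g\<in>set gs. rec_fn n g)
         \<Longrightarrow> rec_fn n (\<lambda>xs. f (map (\<lambda>g. g xs) gs))"
| prim: "rec_fn n f \<Longrightarrow> rec_fn (Suc (Suc n)) g
         \<Longrightarrow> rec_fn (Suc n) (\<lambda>xs. rec_nat (f (tl xs)) (\<lambda>k r. g (r # k # tl xs)) (hd xs))"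
| mu: "rec_fn (Suc n) g \<Longrightarrow> (\<forall>xs. length xs = n \<longrightarrow> (\<exists>y. g (y # xs) = 0))
         \<Longrightarrow> rec_fn n (\<lambda>xs. LEAST y. g (y # xs) = 0)"
| ext: "rec_fn n f \<Longrightarrow> (\<forall>xs. length xs = n \<longrightarrow> f xs = g xs) \<Longrightarrow> rec_fn n g"

text \<open>Binary strings: bool list, True = 1, False = 0; [] is the empty string.\<close>

definition str_code :: "bool list \<Rightarrow> nat" where
  "str_code s = list_encode (map (\<lambda>b. if b then 1 else 0) s)"

definition rat_code :: "rat \<Rightarrow> nat" where
  "rat_code q = prod_encode (int_encode (fst (quotient_of q)), nat (snd (quotient_of q)))"

definition recursive_SN_Q :: "(bool list \<Rightarrow> nat \<Rightarrow> rat) \<Rightarrow> bool" where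
  "recursive_SN_Q r \<longleftrightarrow>
     (\<exists>g. rec_fn 2 g \<and> (\<forall>s n. g [str_code s, n] = rat_code (r s n)))"

definition recursive_NSN_Q :: "(nat \<Rightarrow> bool list \<Rightarrow> nat \<Rightarrow> rat) \<Rightarrow> bool" where
  "recursive_NSN_Q q \<longleftrightarrow>
     (\<exists>g. rec_fn 3 g \<and> (\<forall>i s n. g [i, str_code s, n] = rat_code (q i s n)))"

definition interval_forecast :: "real set \<Rightarrow> bool" where
  "interval_forecast I \<longleftrightarrow> (\<exists>a b. a \<le> b \<and> 0 \<le> a \<and> b \<le> 1 \<and> I = {a..b})"

definition upper_exp :: "real set \<Rightarrow> (bool \<Rightarrow> real) \<Rightarrow> real" where
  "upper_exp I f = (SUP p\<in>I. p * f True + (1 - p) * f False)"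

definition supermartingale_multiplier :: "real set \<Rightarrow> (bool list \<Rightarrow> bool \<Rightarrow> real) \<Rightarrow> bool" where
  "supermartingale_multiplier I D \<longleftrightarrow> (\<forall>s. upper_exp I (D s) \<le> 1)"

definition gen :: "(bool list \<Rightarrow> bool \<Rightarrow> real) \<Rightarrow> bool list \<Rightarrow> real" where
  "gen D s = (\<Prod>k<length s. D (take k s) (s ! k))"

definition test_supermartingale :: "real set \<Rightarrow> (bool list \<Rightarrow> real) \<Rightarrow> bool" where
  "test_supermartingale I T \<longleftrightarrow>
     (\<forall>s. T s \<ge> 0) \<and> T [] = 1 \<and> (\<forall>s. upper_exp I (\<lambda>x. T (s @ [x]) - T s) \<le> 0)"

definition lower_semicomputable :: "(bool list \<Rightarrow> real) \<Rightarrow> bool" where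
  "lower_semicomputable T \<longleftrightarrow>
     (\<exists>r. recursive_SN_Q r \<and> (\<forall>s n. r s n \<le> r s (Suc n)) \<and>
          (\<forall>s. (\<lambda>n. real_of_rat (r s n)) \<longlonglongrightarrow> T s))"

end

theory Submission
  imports Defs
begin

text \<open>
  Fix a forecast \<open>p \<in> I\<close> with \<open>0 < p < 1\<close>. A test supermartingale grows by at most the factor
  \<open>1/p + 1/(1 - p)\<close> per step, so the mixture with weights \<open>2^(-i-1)\<close> converges, and since the
  supermartingale inequality at each forecast is linear it passes to the series.
  For lower semicomputability take the diagonal approximants
  \<open>r s n = (\<Sum>i<n. 2^(-i-1) * max 0 (q i s n))\<close>: they increase in \<open>n\<close> and converge to the
  mixture by monotone convergence. They are computable because addition of nonnegative rationals,
  carried out on numerators and denominators and normalised by a gcd found through unbounded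
  search, is total recursive on the codes.
\<close>

section \<open>Closure properties of total recursive functions\<close>

lemma rec_fn_eqI: "rec_fn n f \<Longrightarrow> (\<And>xs. length xs = n \<Longrightarrow> f xs = g xs) \<Longrightarrow> rec_fn n g"
  using rec_fn.ext by blast

lemma rec_fn_const: "rec_fn n (\<lambda>_. c)"
proof (induction c)
  case 0
  show ?case by (rule rec_fn.zero)
next
  case (Suc c)
  have "rec_fn n (\<lambda>xs. (\<lambda>ys. Suc (hd ys)) (map (\<lambda>g. g xs) [\<lambda>_. c]))"
    using Suc by (intro rec_fn.comp[OF rec_fn.succ]) auto
  then show ?case by simp
qed

lemma rec_fn_comp1: "rec_fn 1 h \<Longrightarrow> rec_fn n f \<Longrightarrow> rec_fn n (\<lambda>xs. h [f xs])"
  using rec_fn.comp[of 1 h "[f]" n] by simp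

lemma rec_fn_comp2:
  "rec_fn 2 h \<Longrightarrow> rec_fn n f \<Longrightarrow> rec_fn n g \<Longrightarrow> rec_fn n (\<lambda>xs. h [f xs, g xs])"
  using rec_fn.comp[of 2 h "[f, g]" n] by simp

lemma rec_fn_comp3:
  "rec_fn 3 h \<Longrightarrow> rec_fn n f \<Longrightarrow> rec_fn n g \<Longrightarrow> rec_fn n k
    \<Longrightarrow> rec_fn n (\<lambda>xs. h [f xs, g xs, k xs])"
  using rec_fn.comp[of 3 h "[f, g, k]" n] by simp

lemma rec_fn_hd: "rec_fn (Suc n) hd"
  by (rule rec_fn_eqI[OF rec_fn.proj[of 0]]) (auto simp: length_Suc_conv)

lemma rec_fn_tl:
  assumes "rec_fn n g"
  shows "rec_fn (Suc n) (\<lambda>xs. g (tl xs))"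
proof -
  have "rec_fn (Suc n) (\<lambda>xs. g (map (\<lambda>h. h xs) (map (\<lambda>i xs. xs ! Suc i) [0..<n])))"
    using assms by (intro rec_fn.comp) (auto intro: rec_fn.proj)
  then show ?thesis
    by (rule rec_fn_eqI) (auto intro!: arg_cong[where f = g] nth_equalityI simp: nth_tl)
qed

lemma rec_fn_Suc: "rec_fn n f \<Longrightarrow> rec_fn n (\<lambda>xs. Suc (f xs))"
  using rec_fn_comp1[OF rec_fn.succ] by simp

lemma rec_fn_plus_nth: "rec_fn 2 (\<lambda>xs. xs ! 0 + xs ! 1)"
proof -
  have closed_form: "rec_nat b (\<lambda>_ r. Suc r) a = a + b" for a b :: nat
    by (induction a) auto
  have "rec_fn 2 (\<lambda>xs. rec_nat (tl xs ! 0) (\<lambda>_ r. Suc r) (hd xs))"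
    using rec_fn.prim[OF rec_fn.proj[of 0 1] rec_fn_Suc[OF rec_fn.proj[of 0 "Suc (Suc 1)"]]]
    by (simp add: numeral_2_eq_2)
  then show ?thesis
    by (rule rec_fn_eqI) (unfold closed_form, auto simp: length_Suc_conv numeral_2_eq_2)
qed

lemma rec_fn_add: "rec_fn n f \<Longrightarrow> rec_fn n g \<Longrightarrow> rec_fn n (\<lambda>xs. f xs + g xs)"
  using rec_fn_comp2[OF rec_fn_plus_nth] by simp

lemma rec_fn_times_nth: "rec_fn 2 (\<lambda>xs. xs ! 0 * xs ! 1)"
proof -
  have closed_form: "rec_nat 0 (\<lambda>_ r. r + b) a = a * b" for a b :: nat
    by (induction a) auto
  have "rec_fn 2 (\<lambda>xs. rec_nat 0 (\<lambda>_ r. r + tl xs ! 0) (hd xs))"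
    using rec_fn.prim[OF rec_fn.zero rec_fn_add[OF rec_fn.proj[of 0 "Suc (Suc 1)"] rec_fn.proj[of 2]]]
    by (simp add: numeral_2_eq_2)
  then show ?thesis
    by (rule rec_fn_eqI) (unfold closed_form, auto simp: length_Suc_conv numeral_2_eq_2)
qed

lemma rec_fn_mult: "rec_fn n f \<Longrightarrow> rec_fn n g \<Longrightarrow> rec_fn n (\<lambda>xs. f xs * g xs)"
  using rec_fn_comp2[OF rec_fn_times_nth] by simp

lemma rec_fn_pred_nth: "rec_fn 1 (\<lambda>xs. xs ! 0 - 1)"
proof -
  have closed_form: "rec_nat 0 (\<lambda>k _. k) a = a - 1" for a :: nat
    by (cases a) auto
  have "rec_fn 1 (\<lambda>xs. rec_nat 0 (\<lambda>k _. k) (hd xs))"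
    using rec_fn.prim[OF rec_fn.zero rec_fn.proj[of 1 "Suc (Suc 0)"]] by simp
  then show ?thesis
    by (rule rec_fn_eqI) (unfold closed_form, auto simp: length_Suc_conv)
qed

lemma rec_fn_minus_nth: "rec_fn 2 (\<lambda>xs. xs ! 1 - xs ! 0)"
proof -
  have closed_form: "rec_nat b (\<lambda>_ r. r - 1) a = b - a" for a b :: nat
    by (induction a) auto
  have "rec_fn 2 (\<lambda>xs. rec_nat (tl xs ! 0) (\<lambda>_ r. r - 1) (hd xs))"
    using rec_fn.prim[OF rec_fn.proj[of 0 1] rec_fn_comp1[OF rec_fn_pred_nth rec_fn.proj[of 0 "Suc (Suc 1)"]]]
    by (simp add: numeral_2_eq_2)
  then show ?thesis
    by (rule rec_fn_eqI) (unfold closed_form, auto simp: length_Suc_conv numeral_2_eq_2)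
qed

lemma rec_fn_diff: "rec_fn n f \<Longrightarrow> rec_fn n g \<Longrightarrow> rec_fn n (\<lambda>xs. f xs - g xs)"
  using rec_fn_comp2[OF rec_fn_minus_nth, of n g f] by simp

lemma rec_fn_power2_nth: "rec_fn 1 (\<lambda>xs. 2 ^ (xs ! 0))"
proof -
  have closed_form: "rec_nat 1 (\<lambda>_ r. r + r) a = (2::nat) ^ a" for a :: nat
    by (induction a) auto
  have "rec_fn 1 (\<lambda>xs. rec_nat 1 (\<lambda>_ r. r + r) (hd xs))"
    using rec_fn.prim[OF rec_fn_const rec_fn_add[OF rec_fn.proj rec_fn.proj, of 0 "Suc (Suc 0)" 0]]
    by simp
  then show ?thesis
    by (rule rec_fn_eqI) (unfold closed_form, auto simp: length_Suc_conv)
qed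

lemma rec_fn_power2: "rec_fn n f \<Longrightarrow> rec_fn n (\<lambda>xs. 2 ^ f xs)"
  using rec_fn_comp1[OF rec_fn_power2_nth] by simp

lemma rec_fn_Least:
  assumes "rec_fn (Suc n) g"
    and "\<And>xs y. length xs = n \<Longrightarrow> g (y # xs) = 0 \<longleftrightarrow> P xs y"
    and "\<And>xs. length xs = n \<Longrightarrow> \<exists>y. P xs y"
  shows "rec_fn n (\<lambda>xs. LEAST y. P xs y)"
proof (rule rec_fn_eqI)
  show "rec_fn n (\<lambda>xs. LEAST y. g (y # xs) = 0)"
    using assms by (intro rec_fn.mu) auto
qed (use assms(2) in simp)

lemma div_nat_eq_Least: "a div b = (LEAST y. b = 0 \<or> a < b * Suc y)" for a b :: nat
proof (cases "b = 0")
  case False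
  show ?thesis
  proof (rule Least_equality[symmetric])
    show "b = 0 \<or> a < b * Suc (a div b)"
      using False by (simp add: dividend_less_times_div)
  next
    fix y assume "b = 0 \<or> a < b * Suc y"
    then have "a div b < Suc y"
      using False by (auto intro: less_mult_imp_div_less simp: mult.commute)
    then show "a div b \<le> y"
      by simp
  qed
qed simp

lemma rec_fn_div:
  assumes f: "rec_fn n f" and g: "rec_fn n g"
  shows "rec_fn n (\<lambda>xs. f xs div g xs)"
proof -
  have "rec_fn n (\<lambda>xs. LEAST y. g xs = 0 \<or> f xs < g xs * Suc y)"
  proof (rule rec_fn_Least)
    show "rec_fn (Suc n) (\<lambda>ys. (Suc (f (tl ys)) - g (tl ys) * Suc (hd ys)) * g (tl ys))"
      by (intro rec_fn_mult rec_fn_diff rec_fn_Suc rec_fn_tl rec_fn_hd f g)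
    show "\<exists>y. g xs = 0 \<or> f xs < g xs * Suc y" for xs
      by (rule exI[of _ "f xs"]) (cases "g xs"; simp)
  qed auto
  then show ?thesis
    by (simp add: div_nat_eq_Least)
qed

lemma rec_fn_mod: "rec_fn n f \<Longrightarrow> rec_fn n g \<Longrightarrow> rec_fn n (\<lambda>xs. f xs mod g xs)"
  by (simp add: rec_fn_diff rec_fn_div rec_fn_mult flip: minus_mult_div_eq_mod)

lemma gcd_nat_eq_Least:
  "gcd a b = a + b - (LEAST y. a + b \<le> y \<or> (a + b - y) dvd a \<and> (a + b - y) dvd b)"
  for a b :: nat
proof (cases "a + b = 0")
  case False
  have gcd_le: "gcd a b \<le> a + b"
    using False by (intro dvd_imp_le) auto
  have "(LEAST y. a + b \<le> y \<or> (a + b - y) dvd a \<and> (a + b - y) dvd b) = a + b - gcd a b"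
  proof (rule Least_equality)
    fix y assume "a + b \<le> y \<or> (a + b - y) dvd a \<and> (a + b - y) dvd b"
    moreover have "a + b - y \<le> gcd a b" if "(a + b - y) dvd a" "(a + b - y) dvd b"
      using that False by (intro dvd_imp_le) auto
    ultimately show "a + b - gcd a b \<le> y"
      by linarith
  qed (use gcd_le in simp)
  then show ?thesis
    using gcd_le by simp
qed simp

lemma rec_fn_gcd:
  assumes f: "rec_fn n f" and g: "rec_fn n g"
  shows "rec_fn n (\<lambda>xs. gcd (f xs) (g xs))"
proof -
  let ?s = "\<lambda>xs. f xs + g xs"
  let ?P = "\<lambda>xs y. ?s xs \<le> y \<or> (?s xs - y) dvd f xs \<and> (?s xs - y) dvd g xs"
  let ?d = "\<lambda>ys. ?s (tl ys) - hd ys"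
  have "rec_fn n (\<lambda>xs. LEAST y. ?P xs y)"
  proof (rule rec_fn_Least)
    show "rec_fn (Suc n) (\<lambda>ys. (f (tl ys) mod ?d ys + g (tl ys) mod ?d ys) * ?d ys)"
      by (intro rec_fn_mult rec_fn_add rec_fn_mod rec_fn_diff rec_fn_tl rec_fn_hd f g)
  qed (auto simp: dvd_eq_mod_eq_0)
  then have "rec_fn n (\<lambda>xs. ?s xs - (LEAST y. ?P xs y))"
    by (intro rec_fn_diff rec_fn_add f g)
  then show ?thesis
    unfolding gcd_nat_eq_Least .
qed

section \<open>Arithmetic on codes of nonnegative rationals\<close>

lemma rec_fn_triangle: "rec_fn n f \<Longrightarrow> rec_fn n (\<lambda>xs. triangle (f xs))"
  unfolding triangle_def by (intro rec_fn_div rec_fn_mult rec_fn_Suc rec_fn_const)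

text \<open>The diagonal of Cantor's pairing on which \<open>c\<close> lies.\<close>

definition prod_diagonal :: "nat \<Rightarrow> nat" where
  "prod_diagonal c = (LEAST k. c < triangle (Suc k))"

lemma triangle_prod_diagonal:
  "triangle (prod_diagonal c) \<le> c \<and> c < triangle (Suc (prod_diagonal c))"
proof
  have "c < triangle (Suc c)"
    by simp
  then show "c < triangle (Suc (prod_diagonal c))"
    unfolding prod_diagonal_def by (rule LeastI)
  show "triangle (prod_diagonal c) \<le> c"
  proof (cases "prod_diagonal c")
    case (Suc k)
    then have "k < prod_diagonal c"
      by simp
    then have "\<not> c < triangle (Suc k)"
      unfolding prod_diagonal_def by (rule not_less_Least)
    then show ?thesis
      using Suc by (simp del: triangle_Suc)
  qed simp
qed

lemma prod_decode_via_diagonal: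
  "prod_decode c = (c - triangle (prod_diagonal c), prod_diagonal c - (c - triangle (prod_diagonal c)))"
proof -
  let ?k = "prod_diagonal c"
  have "c - triangle ?k \<le> ?k" "triangle ?k \<le> c"
    using triangle_prod_diagonal[of c] by auto
  then have "prod_encode (c - triangle ?k, ?k - (c - triangle ?k)) = c"
    unfolding prod_encode_def by simp
  then show ?thesis
    using prod_encode_inverse[of "(c - triangle ?k, ?k - (c - triangle ?k))"] by simp
qed

lemma rec_fn_prod_diagonal:
  assumes f: "rec_fn n f"
  shows "rec_fn n (\<lambda>xs. prod_diagonal (f xs))"
  unfolding prod_diagonal_def
proof (rule rec_fn_Least)
  show "rec_fn (Suc n) (\<lambda>ys. Suc (f (tl ys)) - triangle (Suc (hd ys)))"
    by (intro rec_fn_diff rec_fn_Suc rec_fn_triangle rec_fn_tl rec_fn_hd f)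
  show "\<exists>k. f xs < triangle (Suc k)" for xs
    using triangle_prod_diagonal by blast
qed (simp_all del: triangle_Suc add: Suc_le_eq)

lemma rec_fn_prod_decode_fst:
  assumes "rec_fn n f"
  shows "rec_fn n (\<lambda>xs. fst (prod_decode (f xs)))"
  unfolding prod_decode_via_diagonal prod.sel
  by (intro rec_fn_diff rec_fn_triangle rec_fn_prod_diagonal assms)

lemma rec_fn_prod_decode_snd:
  assumes "rec_fn n f"
  shows "rec_fn n (\<lambda>xs. snd (prod_decode (f xs)))"
  unfolding prod_decode_via_diagonal prod.sel
  by (intro rec_fn_diff rec_fn_triangle rec_fn_prod_diagonal assms)

text \<open>\<open>int_encode\<close> sends \<open>z \<ge> 0\<close> to \<open>2 z\<close> and negative integers to odd numbers, so
  \<open>rat_code_num\<close> decodes the positive part of the numerator.\<close>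

definition rat_code_num :: "nat \<Rightarrow> nat" where
  "rat_code_num c = fst (prod_decode c) div 2 * (1 - fst (prod_decode c) mod 2)"

definition rat_code_den :: "nat \<Rightarrow> nat" where
  "rat_code_den c = snd (prod_decode c)"

definition fraction_code :: "nat \<Rightarrow> nat \<Rightarrow> nat" where
  "fraction_code a b = prod_encode (2 * (a div gcd a b), b div gcd a b)"

lemma rat_code_num_den:
  "0 < rat_code_den (rat_code x)
   \<and> of_nat (rat_code_num (rat_code x)) / of_nat (rat_code_den (rat_code x)) = max 0 x"
proof -
  obtain a b where ab: "quotient_of x = (a, b)"
    by force
  have b: "0 < b"
    using quotient_of_denom_pos[OF ab] .
  have "max 0 x = of_int (max 0 a) / of_int b"
    using b by (auto simp: quotient_of_div[OF ab] max_def divide_nonneg_pos field_simps)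
  moreover have "rat_code_num (rat_code x) = nat (max 0 a)" "rat_code_den (rat_code x) = nat b"
    by (auto simp: rat_code_num_def rat_code_den_def rat_code_def ab int_encode_def sum_encode_def)
  ultimately show ?thesis
    using b by simp
qed

lemma fraction_code_eq_rat_code:
  assumes "0 < b"
  shows "fraction_code a b = rat_code (of_nat a / of_nat b)"
proof -
  have "of_nat a / of_nat b = Fract (int a) (int b)"
    by (simp add: Fract_of_int_quotient)
  then have "quotient_of (of_nat a / of_nat b) = (int a div int (gcd a b), int b div int (gcd a b))"
    using assms by (simp add: quotient_of_Fract normalize_def gcd_int_int_eq Let_def)
  also have "\<dots> = (int (a div gcd a b), int (b div gcd a b))"
    by (simp add: zdiv_int)
  finally show ?thesis
    using assms by (simp add: rat_code_def fraction_code_def int_encode_def sum_encode_def)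
qed

lemma rec_fn_rat_code_num: "rec_fn n f \<Longrightarrow> rec_fn n (\<lambda>xs. rat_code_num (f xs))"
  unfolding rat_code_num_def
  by (intro rec_fn_mult rec_fn_div rec_fn_diff rec_fn_mod rec_fn_prod_decode_fst rec_fn_const)

lemma rec_fn_rat_code_den: "rec_fn n f \<Longrightarrow> rec_fn n (\<lambda>xs. rat_code_den (f xs))"
  unfolding rat_code_den_def by (rule rec_fn_prod_decode_snd)

lemma rec_fn_fraction_code:
  "rec_fn n f \<Longrightarrow> rec_fn n g \<Longrightarrow> rec_fn n (\<lambda>xs. fraction_code (f xs) (g xs))"
  unfolding fraction_code_def prod_encode_def split
  by (intro rec_fn_add rec_fn_triangle rec_fn_mult rec_fn_div rec_fn_gcd rec_fn_const)

definition rat_code_add :: "nat \<Rightarrow> nat \<Rightarrow> nat" where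
  "rat_code_add c d =
     fraction_code (rat_code_num c * rat_code_den d + rat_code_num d * rat_code_den c)
       (rat_code_den c * rat_code_den d)"

lemma rat_code_add_rat_code:
  assumes "0 \<le> x" "0 \<le> y"
  shows "rat_code_add (rat_code x) (rat_code y) = rat_code (x + y)"
proof -
  from rat_code_num_den[of x] rat_code_num_den[of y] assms
  obtain a b c d where "0 < b" "0 < d" "of_nat a / of_nat b = x" "of_nat c / of_nat d = y"
    and "rat_code_num (rat_code x) = a" "rat_code_den (rat_code x) = b"
    and "rat_code_num (rat_code y) = c" "rat_code_den (rat_code y) = d"
    by auto
  moreover have "(of_nat (a * d + c * b) :: rat) / of_nat (b * d) = of_nat a / of_nat b + of_nat c / of_nat d"
    using \<open>0 < b\<close> \<open>0 < d\<close> by (simp add: field_simps)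
  ultimately show ?thesis
    unfolding rat_code_add_def by (simp add: fraction_code_eq_rat_code)
qed

lemma rec_fn_rat_code_add:
  "rec_fn n f \<Longrightarrow> rec_fn n g \<Longrightarrow> rec_fn n (\<lambda>xs. rat_code_add (f xs) (g xs))"
  unfolding rat_code_add_def
  by (intro rec_fn_fraction_code rec_fn_add rec_fn_mult rec_fn_rat_code_num rec_fn_rat_code_den)

lemma recursive_NSN_Q_weighted_pos_part:
  assumes "recursive_NSN_Q q"
  shows "recursive_NSN_Q (\<lambda>i s n. (1/2) ^ (i+1) * max 0 (q i s n))"
proof -
  obtain G where G: "rec_fn 3 G" "\<And>i s n. G [i, str_code s, n] = rat_code (q i s n)"
    using assms unfolding recursive_NSN_Q_def by blast
  let ?H = "\<lambda>xs. fraction_code (rat_code_num (G xs)) (rat_code_den (G xs) * 2 ^ Suc (xs ! 0))"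
  have "rec_fn 3 ?H"
    by (intro rec_fn_fraction_code rec_fn_rat_code_num rec_fn_rat_code_den rec_fn_mult
        rec_fn_power2 rec_fn_Suc G(1) rec_fn.proj) simp
  moreover have "?H [i, str_code s, n] = rat_code ((1/2) ^ (i+1) * max 0 (q i s n))" for i s n
  proof -
    obtain a b where "0 < b" "of_nat a / of_nat b = max 0 (q i s n)"
      and "rat_code_num (G [i, str_code s, n]) = a" "rat_code_den (G [i, str_code s, n]) = b"
      using rat_code_num_den[of "q i s n"] by (auto simp: G(2))
    then show ?thesis
      by (simp add: fraction_code_eq_rat_code field_simps)
  qed
  ultimately show ?thesis
    unfolding recursive_NSN_Q_def by blast
qed

lemma recursive_SN_Q_partial_sums:
  assumes "recursive_NSN_Q t" and nonneg: "\<And>i s n. 0 \<le> t i s n"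
  shows "recursive_SN_Q (\<lambda>s n. \<Sum>i<n. t i s n)"
proof -
  obtain G where G: "rec_fn 3 G" "\<And>i s n. G [i, str_code s, n] = rat_code (t i s n)"
    using assms unfolding recursive_NSN_Q_def by blast
  define S where "S = (\<lambda>xs. rec_nat (rat_code 0) (\<lambda>k r. rat_code_add r (G (k # tl xs))) (hd xs))"
  have "rec_fn (Suc (Suc 2)) (\<lambda>ys. G (tl ys))"
    using rec_fn_tl[OF G(1)] by simp
  then have "rec_fn (Suc (Suc 2)) (\<lambda>ys. rat_code_add (ys ! 0) (G (tl ys)))"
    by (intro rec_fn_rat_code_add rec_fn.proj) simp_all
  from rec_fn.prim[OF rec_fn_const[of 2 "rat_code 0"] this] have "rec_fn 3 S"
    by (simp add: S_def numeral_3_eq_3)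
  then have "rec_fn 2 (\<lambda>xs. S [xs ! 1, xs ! 0, xs ! 1])"
    by (intro rec_fn_comp3 rec_fn.proj) simp_all
  moreover have "S [k, str_code s, n] = rat_code (\<Sum>i<k. t i s n)" for k s n
    by (induction k) (simp_all add: S_def G(2) rat_code_add_rat_code sum_nonneg nonneg)
  ultimately show ?thesis
    unfolding recursive_SN_Q_def by auto
qed

section \<open>Mixtures of test supermartingales\<close>

lemma upper_exp_le_iff:
  assumes "interval_forecast I"
  shows "upper_exp I f \<le> c \<longleftrightarrow> (\<forall>p\<in>I. p * f True + (1 - p) * f False \<le> c)"
proof -
  obtain a b where "a \<le> b" "0 \<le> a" "b \<le> 1" "I = {a..b}"
    using assms unfolding interval_forecast_def by blast
  then have "I \<noteq> {}" and p01: "\<And>p. p \<in> I \<Longrightarrow> 0 \<le> p \<and> p \<le> 1"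
    by auto
  have "p * f True + (1 - p) * f False \<le> max (f True) (f False)" if "p \<in> I" for p
    using p01[OF that] by (intro convex_bound_le) auto
  then have "bdd_above ((\<lambda>p. p * f True + (1 - p) * f False) ` I)"
    by (intro bdd_aboveI2) blast
  with \<open>I \<noteq> {}\<close> show ?thesis
    unfolding upper_exp_def by (rule cSUP_le_iff)
qed

lemma test_supermartingale_step:
  assumes "interval_forecast I" and "test_supermartingale I T" and "p \<in> I"
  shows "p * T (s @ [True]) + (1 - p) * T (s @ [False]) \<le> T s"
proof -
  have "p * (T (s @ [True]) - T s) + (1 - p) * (T (s @ [False]) - T s) \<le> 0"
    using assms by (auto simp: test_supermartingale_def upper_exp_le_iff)
  then show ?thesis
    by (simp add: algebra_simps)
qed

lemma test_supermartingale_le_power: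
  assumes I: "interval_forecast I" and T: "test_supermartingale I T"
    and p: "p \<in> I" "0 < p" "p < 1"
  shows "T s \<le> (1/p + 1/(1 - p)) ^ length s"
proof (induction s rule: rev_induct)
  case Nil
  then show ?case
    using T by (simp add: test_supermartingale_def)
next
  case (snoc x s)
  let ?K = "1/p + 1/(1 - p)"
  have nonneg: "0 \<le> T s'" for s'
    using T by (simp add: test_supermartingale_def)
  have step: "p * T (s @ [True]) + (1 - p) * T (s @ [False]) \<le> T s"
    by (rule test_supermartingale_step[OF I T p(1)])
  moreover have "0 \<le> p * T (s @ [True])" "0 \<le> (1 - p) * T (s @ [False])"
    using nonneg p by simp_all
  ultimately have "p * T (s @ [True]) \<le> T s" "(1 - p) * T (s @ [False]) \<le> T s"
    by linarith+
  then have "T (s @ [True]) \<le> 1/p * T s" "T (s @ [False]) \<le> 1/(1 - p) * T s"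
    using p by (simp_all add: field_simps)
  moreover have "1/p * T s \<le> ?K * T s"
    using p nonneg[of s] by (intro mult_right_mono) simp_all
  moreover have "1/(1 - p) * T s \<le> ?K * T s"
    using p nonneg[of s] by (intro mult_right_mono) simp_all
  ultimately have "T (s @ [x]) \<le> ?K * T s"
    by (cases x) auto
  also have "\<dots> \<le> ?K * ?K ^ length s"
    using snoc.IH p by (intro mult_left_mono) auto
  finally show ?case
    by simp
qed

lemma test_supermartingale_mixture:
  assumes I: "interval_forecast I" and T: "\<And>i. test_supermartingale I (T i)"
    and c: "c sums 1" "\<And>i. 0 \<le> c i"
    and summable: "\<And>s. summable (\<lambda>i. c i * T i s)"
  shows "test_supermartingale I (\<lambda>s. \<Sum>i. c i * T i s)"
  unfolding test_supermartingale_def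
proof (intro conjI allI)
  have T_nonneg: "0 \<le> T i s" for i s
    using T by (simp add: test_supermartingale_def)
  show "0 \<le> (\<Sum>i. c i * T i s)" for s
    using summable T_nonneg c(2) by (intro suminf_nonneg) auto
  show "(\<Sum>i. c i * T i []) = 1"
    using T c(1) by (simp add: test_supermartingale_def sums_iff)
  fix s
  let ?S = "\<lambda>s. \<Sum>i. c i * T i s"
  show "upper_exp I (\<lambda>x. ?S (s @ [x]) - ?S s) \<le> 0"
    unfolding upper_exp_le_iff[OF I]
  proof
    fix p assume p: "p \<in> I"
    let ?t = "\<lambda>i. c i * (p * (T i (s @ [True]) - T i s) + (1 - p) * (T i (s @ [False]) - T i s))"
    have "?t sums (p * (?S (s @ [True]) - ?S s) + (1 - p) * (?S (s @ [False]) - ?S s))"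
    proof -
      have "(\<lambda>i. p * (c i * T i (s @ [True]) - c i * T i s) + (1 - p) * (c i * T i (s @ [False]) - c i * T i s))
            sums (p * (?S (s @ [True]) - ?S s) + (1 - p) * (?S (s @ [False]) - ?S s))"
        using summable by (intro sums_add sums_mult sums_diff summable_sums)
      then show ?thesis
        by (simp add: algebra_simps)
    qed
    moreover have "?t i \<le> 0" for i
      using test_supermartingale_step[OF I T p, of i s] c(2)[of i]
      by (intro mult_nonneg_nonpos) (auto simp: algebra_simps)
    ultimately show "p * (?S (s @ [True]) - ?S s) + (1 - p) * (?S (s @ [False]) - ?S s) \<le> 0"
      using sums_le[of ?t "\<lambda>_. 0"] by fastforce
  qed
qed

section \<open>Lower semicomputability of mixtures\<close>

lemma diagonal_sum_mono:
  fixes f :: "nat \<Rightarrow> nat \<Rightarrow> 'a::ordered_comm_monoid_add"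
  assumes "\<And>i n. f i n \<le> f i (Suc n)" and "\<And>i n. 0 \<le> f i n"
  shows "(\<Sum>i<n. f i n) \<le> (\<Sum>i<Suc n. f i (Suc n))"
proof -
  have "(\<Sum>i<n. f i n) \<le> (\<Sum>i<n. f i (Suc n))"
    by (intro sum_mono assms(1))
  also have "\<dots> \<le> (\<Sum>i<Suc n. f i (Suc n))"
    using assms(2) by (simp add: add_increasing2)
  finally show ?thesis .
qed

lemma diagonal_sum_tendsto_suminf:
  fixes f :: "nat \<Rightarrow> nat \<Rightarrow> real"
  assumes mono: "\<And>i n. f i n \<le> f i (Suc n)" and nonneg: "\<And>i n. 0 \<le> f i n"
    and lim: "\<And>i. (\<lambda>n. f i n) \<longlonglongrightarrow> g i" and "summable g"
  shows "(\<lambda>n. \<Sum>i<n. f i n) \<longlonglongrightarrow> (\<Sum>i. g i)"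
proof -
  define R where "R n = (\<Sum>i<n. f i n)" for n
  have "incseq (\<lambda>n. f i n)" for i
    by (rule incseq_SucI) (rule mono)
  then have f_le_g: "f i n \<le> g i" for i n
    using incseq_le lim by blast
  have g_nonneg: "0 \<le> g i" for i
    using nonneg[of i 0] f_le_g[of i 0] by simp
  have "R n \<le> (\<Sum>i<n. g i)" for n
    unfolding R_def by (intro sum_mono f_le_g)
  also have "(\<Sum>i<n. g i) \<le> (\<Sum>i. g i)" for n
    using \<open>summable g\<close> g_nonneg by (intro sum_le_suminf) auto
  finally have R_le: "R n \<le> (\<Sum>i. g i)" for n .
  have "incseq R"
    unfolding R_def using diagonal_sum_mono[of f, OF mono nonneg] by (intro incseq_SucI) simp
  then obtain L where L: "R \<longlonglongrightarrow> L" "\<And>n. R n \<le> L"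
    using incseq_convergent[of R "\<Sum>i. g i"] R_le by blast
  have "(\<Sum>i<m. g i) \<le> L" for m
  proof (rule LIMSEQ_le_const2)
    show "(\<lambda>n. \<Sum>i<m. f i n) \<longlonglongrightarrow> (\<Sum>i<m. g i)"
      by (intro tendsto_sum lim)
    have "(\<Sum>i<m. f i n) \<le> R n" if "m \<le> n" for n
      unfolding R_def using that nonneg by (intro sum_mono2) auto
    then show "\<exists>N. \<forall>n\<ge>N. (\<Sum>i<m. f i n) \<le> L"
      using L(2) order_trans by blast
  qed
  then have "(\<Sum>i. g i) \<le> L"
    by (rule suminf_le_const[OF \<open>summable g\<close>])
  moreover have "L \<le> (\<Sum>i. g i)"
    using L(1) R_le by (intro LIMSEQ_le_const2) auto
  ultimately have "L = (\<Sum>i. g i)"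
    by (rule antisym[rotated])
  then show ?thesis
    using L(1) unfolding R_def by simp
qed

lemma lower_semicomputable_mixture:
  fixes T :: "nat \<Rightarrow> bool list \<Rightarrow> real"
  assumes "recursive_NSN_Q q" and q_mono: "\<And>i s n. q i s n \<le> q i s (Suc n)"
    and q_lim: "\<And>i s. (\<lambda>n. real_of_rat (q i s n)) \<longlonglongrightarrow> T i s"
    and T_nonneg: "\<And>i s. 0 \<le> T i s"
    and summable: "\<And>s. summable (\<lambda>i. (1/2) ^ (i+1) * T i s)"
  shows "lower_semicomputable (\<lambda>s. \<Sum>i. (1/2) ^ (i+1) * T i s)"
  unfolding lower_semicomputable_def
proof (intro exI conjI allI)
  let ?r = "\<lambda>s n. \<Sum>i<n. (1/2) ^ (i+1) * max 0 (q i s n)"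
  show "recursive_SN_Q ?r"
    by (intro recursive_SN_Q_partial_sums recursive_NSN_Q_weighted_pos_part assms(1)) simp
  show "?r s n \<le> ?r s (Suc n)" for s n
    by (intro diagonal_sum_mono mult_left_mono max.mono q_mono) simp_all
  fix s
  have of_rat_max: "real_of_rat (max 0 x) = max 0 (real_of_rat x)" for x
    by (simp add: max_def of_rat_less_eq)
  have "real_of_rat (?r s n) = (\<Sum>i<n. (1/2) ^ (i+1) * max 0 (real_of_rat (q i s n)))" for n
    by (simp add: of_rat_sum of_rat_mult of_rat_power of_rat_divide of_rat_max)
  moreover have "(\<lambda>n. \<Sum>i<n. (1/2) ^ (i+1) * max 0 (real_of_rat (q i s n)))
      \<longlonglongrightarrow> (\<Sum>i. (1/2) ^ (i+1) * T i s)"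
  proof (rule diagonal_sum_tendsto_suminf[OF _ _ _ summable])
    show "(\<lambda>n. (1/2) ^ (i+1) * max 0 (real_of_rat (q i s n))) \<longlonglongrightarrow> (1/2) ^ (i+1) * T i s" for i
      using tendsto_max[OF tendsto_const q_lim, of 0 i s] T_nonneg[of i s]
      by (intro tendsto_mult_left) (simp add: max_absorb2)
    show "(1/2) ^ (i+1) * max 0 (real_of_rat (q i s n))
          \<le> (1/2) ^ (i+1) * max 0 (real_of_rat (q i s (Suc n)))" for i n
      by (intro mult_left_mono max.mono) (simp_all add: of_rat_less_eq q_mono)
  qed simp
  ultimately show "(\<lambda>n. real_of_rat (?r s n)) \<longlonglongrightarrow> (\<Sum>i. (1/2) ^ (i+1) * T i s)"
    by simp
qed

theorem lemma5:
  fixes I :: "real set" and D :: "nat \<Rightarrow> bool list \<Rightarrow> bool \<Rightarrow> real"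
    and q :: "nat \<Rightarrow> bool list \<Rightarrow> nat \<Rightarrow> rat"
  assumes "interval_forecast I" and "I \<subseteq> {0<..<1}"
    and "\<And>i s x. D i s x \<ge> 0"
    and "\<And>i. supermartingale_multiplier I (D i)"
    and "\<And>i. test_supermartingale I (gen (D i))"
    and "recursive_NSN_Q q"
    and "\<And>i s n. q i s (Suc n) \<ge> q i s n"
    and "\<And>i s. (\<lambda>n. real_of_rat (q i s n)) \<longlonglongrightarrow> gen (D i) s"
  shows "test_supermartingale I (\<lambda>s. \<Sum>i. (1/2) ^ (i+1) * gen (D i) s)
         \<and> lower_semicomputable (\<lambda>s. \<Sum>i. (1/2) ^ (i+1) * gen (D i) s)"
proof -
  obtain p where p: "p \<in> I" "0 < p" "p < 1"
    using assms(1,2) unfolding interval_forecast_def by fastforce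
  have weights: "(\<lambda>i. (1/2::real) ^ (i+1)) sums 1"
    using power_half_series by simp
  have nonneg: "0 \<le> gen (D i) s" for i s
    using assms(5) by (simp add: test_supermartingale_def)
  have summable: "summable (\<lambda>i. (1/2) ^ (i+1) * gen (D i) s)" for s
  proof (rule summable_comparison_test')
    show "summable (\<lambda>i. (1/2) ^ (i+1) * (1/p + 1/(1 - p)) ^ length s)"
      using weights by (intro summable_mult2) (simp add: sums_iff)
    show "norm ((1/2) ^ (i+1) * gen (D i) s) \<le> (1/2) ^ (i+1) * (1/p + 1/(1 - p)) ^ length s" for i
      using test_supermartingale_le_power[OF assms(1,5) p] nonneg by simp
  qed
  show ?thesis
    using test_supermartingale_mixture[OF assms(1,5) weights _ summable]
      lower_semicomputable_mixture[OF assms(6,7,8) nonneg summable]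
    by simp
qed

end
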